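(* Let $d\ge2$, let $L\subseteq\mathbb{R}^d$ be a linear subspace, $p^\star\in L$, $\zeta>0$, and $h\in L$ a unit vector. Let $q$ be a point drawn uniformly at random from the ball $\mathcal{B}_L(p^\star,\zeta)=\{z\in L:\|z-p^\star\|_2\le\zeta\}$. Then with probability at least $\frac{1}{20\sqrt{d-1}}$, $\langle h,q\rangle\ge\langle h,p^\star\rangle+\frac{\zeta\ln(3/2)}{\sqrt{d-1}}$. *)

theory Defs
  imports "HOL-Analysis.Analysis"
begin

text \<open>Uniform distribution on the ball B_L(p, r) = {z \<in> L. norm (z - p) \<le> r} of a linear
  subspace L, where L is parametrised by a linear isometry g from a Euclidean space 'k onto L
  (so DIM('k) = dim L). It is the push-forward of the normalised Lebesgue measure on the
  ball cball 0 r of 'k under y \<mapsto> p + g y; this is the normalised dim(L)-dimensional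
  volume measure on B_L(p, r) and does not depend on the choice of g.\<close>
definition uniform_subspace_ball ::
    "('k::euclidean_space \<Rightarrow> 'a::euclidean_space) \<Rightarrow> 'a \<Rightarrow> real \<Rightarrow> 'a measure" where
  "uniform_subspace_ball g p r =
     distr (uniform_measure lborel (cball 0 r)) borel (\<lambda>y. p + g y)"

end

theory Submission
  imports Defs
begin

text \<open>Since g is a linear isometry, the event pulls back to the cap
  \<open>{y. norm y \<le> \<zeta> \<and> \<sigma> \<le> u \<bullet> y}\<close> of the ball of radius \<open>\<zeta>\<close> in \<open>'k\<close>, where \<open>h = g u\<close> and
  \<open>\<sigma> = \<zeta> ln(3/2) / sqrt(d - 1)\<close>. Lebesgue measure is invariant under rotations (a plane
  rotation is a product of three shears), so u may be taken to be a basis vector. Slicing along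
  that axis, the cap contains a cylinder of height \<open>\<sigma>\<close> over a \<open>(k - 1)\<close>-ball of radius
  \<open>sqrt(\<zeta>\<^sup>2 - 4\<sigma>\<^sup>2)\<close>, and the whole ball lies in a cylinder of height \<open>2\<zeta>\<close> over a
  \<open>(k - 1)\<close>-ball of radius \<open>\<zeta>\<close>. The ratio of their volumes,
  \<open>(\<sigma> / 2\<zeta>) (1 - 4\<sigma>\<^sup>2/\<zeta>\<^sup>2)\<^bsup>(k-1)/2\<^esup>\<close>, is at least \<open>1 / (20 sqrt(d - 1))\<close> by Bernoulli's
  inequality, \<open>k \<le> d\<close> and \<open>1/3 \<le> ln(3/2) \<le> 9/20\<close>.\<close>

section \<open>Rotation invariance of Lebesgue measure\<close>

lemma sum_Basis_fun_upd:
  fixes x :: "'a::euclidean_space \<Rightarrow> real"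
  assumes "i \<in> Basis"
  shows "(\<Sum>b\<in>Basis. (x(i := t)) b *\<^sub>R b) = (\<Sum>b\<in>Basis - {i}. x b *\<^sub>R b) + t *\<^sub>R i"
proof -
  have "(\<Sum>b\<in>Basis. (x(i := t)) b *\<^sub>R b) = t *\<^sub>R i + (\<Sum>b\<in>Basis - {i}. (x(i := t)) b *\<^sub>R b)"
    using assms by (simp add: sum.remove)
  also have "(\<Sum>b\<in>Basis - {i}. (x(i := t)) b *\<^sub>R b) = (\<Sum>b\<in>Basis - {i}. x b *\<^sub>R b)"
    by (intro sum.cong) auto
  finally show ?thesis by (simp add: add.commute)
qed

lemma nn_integral_lborel_Basis_split:
  fixes f :: "'a::euclidean_space \<Rightarrow> ennreal"
  assumes i: "i \<in> Basis" and [measurable]: "f \<in> borel_measurable borel"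
  defines "P \<equiv> \<Pi>\<^sub>M b\<in>Basis - {i}. lborel"
  shows "(\<integral>\<^sup>+ y. f y \<partial>lborel) =
      (\<integral>\<^sup>+ x. \<integral>\<^sup>+ t. f ((\<Sum>b\<in>Basis - {i}. x b *\<^sub>R b) + t *\<^sub>R i) \<partial>lborel \<partial>P)"
    and "(\<integral>\<^sup>+ y. f y \<partial>lborel) =
      (\<integral>\<^sup>+ t. \<integral>\<^sup>+ x. f ((\<Sum>b\<in>Basis - {i}. x b *\<^sub>R b) + t *\<^sub>R i) \<partial>P \<partial>lborel)"
proof -
  interpret product_sigma_finite "\<lambda>_. lborel" by standard
  have "(\<integral>\<^sup>+ y. f y \<partial>lborel) = (\<integral>\<^sup>+ x. f (\<Sum>b\<in>Basis. x b *\<^sub>R b) \<partial>(\<Pi>\<^sub>M b\<in>Basis. lborel))"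
    by (subst lborel_eq) (simp add: nn_integral_distr)
  also have "\<dots> = (\<integral>\<^sup>+ x. f (\<Sum>b\<in>Basis. x b *\<^sub>R b) \<partial>(\<Pi>\<^sub>M b\<in>insert i (Basis - {i}). lborel))"
    by (simp only: insert_Diff[OF i])
  finally have split: "(\<integral>\<^sup>+ y. f y \<partial>lborel) = \<dots>" .
  show "(\<integral>\<^sup>+ y. f y \<partial>lborel) = (\<integral>\<^sup>+ x. \<integral>\<^sup>+ t. f ((\<Sum>b\<in>Basis - {i}. x b *\<^sub>R b) + t *\<^sub>R i) \<partial>lborel \<partial>P)"
    unfolding split P_def
    by (subst product_nn_integral_insert) (auto simp: sum_Basis_fun_upd[OF i] simp del: fun_upd_apply)
  show "(\<integral>\<^sup>+ y. f y \<partial>lborel) = (\<integral>\<^sup>+ t. \<integral>\<^sup>+ x. f ((\<Sum>b\<in>Basis - {i}. x b *\<^sub>R b) + t *\<^sub>R i) \<partial>P \<partial>lborel)"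
    unfolding split P_def
    by (subst product_nn_integral_insert_rev)
      (auto simp: sum_Basis_fun_upd[OF i] simp del: fun_upd_apply)
qed

lemma lborel_distr_shear:
  fixes i j :: "'a::euclidean_space"
  assumes i: "i \<in> Basis" and j: "j \<in> Basis" and "i \<noteq> j"
  shows "distr lborel borel (\<lambda>y. y + (a * (y \<bullet> j)) *\<^sub>R i) = lborel"
proof (rule measure_eqI)
  fix A :: "'a set" assume "A \<in> sets (distr lborel borel (\<lambda>y. y + (a * (y \<bullet> j)) *\<^sub>R i))"
  then have [measurable]: "A \<in> sets borel" by simp
  let ?P = "\<Pi>\<^sub>M b\<in>Basis - {i}. lborel"
  have shift: "(\<integral>\<^sup>+ t. indicator A (w + t *\<^sub>R i + (a * ((w + t *\<^sub>R i) \<bullet> j)) *\<^sub>R i) \<partial>lborel)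
      = (\<integral>\<^sup>+ t. indicator A (w + t *\<^sub>R i) \<partial>lborel)" if "w \<bullet> j = c" for w c
  proof -
    have "w + t *\<^sub>R i + (a * ((w + t *\<^sub>R i) \<bullet> j)) *\<^sub>R i = w + (a * c + t) *\<^sub>R i" for t
      using that i j \<open>i \<noteq> j\<close> by (simp add: inner_simps inner_Basis algebra_simps)
    then show ?thesis
      by (simp only:)
        (use nn_integral_real_affine[of "\<lambda>t. indicator A (w + t *\<^sub>R i)" 1 "a * c"] in simp)
  qed
  have "emeasure (distr lborel borel (\<lambda>y. y + (a * (y \<bullet> j)) *\<^sub>R i)) A
      = (\<integral>\<^sup>+ y. indicator A (y + (a * (y \<bullet> j)) *\<^sub>R i) \<partial>lborel)"
    by (simp flip: nn_integral_indicator add: nn_integral_distr)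
  also have "\<dots> = (\<integral>\<^sup>+ x. \<integral>\<^sup>+ t. indicator A ((\<Sum>b\<in>Basis - {i}. x b *\<^sub>R b) + t *\<^sub>R i) \<partial>lborel \<partial>?P)"
    by (simp add: nn_integral_lborel_Basis_split(1)[OF i] shift)
  also have "\<dots> = emeasure lborel A"
    by (simp add: nn_integral_lborel_Basis_split(1)[OF i, symmetric])
  finally show "emeasure (distr lborel borel (\<lambda>y. y + (a * (y \<bullet> j)) *\<^sub>R i)) A = emeasure lborel A" .
qed simp

lemma linear_borel_measurable:
  fixes T :: "'a::euclidean_space \<Rightarrow> 'b::euclidean_space"
  shows "linear T \<Longrightarrow> T \<in> borel_measurable borel"
  by (intro borel_measurable_continuous_onI linear_continuous_on)
    (simp add: linear_conv_bounded_linear)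

definition plane_rotation :: "'a::real_inner \<Rightarrow> 'a \<Rightarrow> real \<Rightarrow> real \<Rightarrow> 'a \<Rightarrow> 'a" where
  "plane_rotation i j c s y =
     y + ((c - 1) * (y \<bullet> i) - s * (y \<bullet> j)) *\<^sub>R i + (s * (y \<bullet> i) + (c - 1) * (y \<bullet> j)) *\<^sub>R j"

lemma inner_plane_rotation:
  fixes i j :: "'a::real_inner"
  assumes "i \<bullet> i = 1" "j \<bullet> j = 1" "i \<bullet> j = 0"
  shows "plane_rotation i j c s y \<bullet> i = c * (y \<bullet> i) - s * (y \<bullet> j)"
    and "plane_rotation i j c s y \<bullet> j = s * (y \<bullet> i) + c * (y \<bullet> j)"
    and "b \<bullet> i = 0 \<Longrightarrow> b \<bullet> j = 0 \<Longrightarrow> plane_rotation i j c s y \<bullet> b = y \<bullet> b"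
  using assms by (auto simp: plane_rotation_def inner_simps inner_commute algebra_simps)

lemma orthogonal_transformation_plane_rotation:
  fixes i j :: "'a::real_inner"
  assumes "i \<bullet> i = 1" "j \<bullet> j = 1" "i \<bullet> j = 0" and "c\<^sup>2 + s\<^sup>2 = 1"
  shows "orthogonal_transformation (plane_rotation i j c s)"
  unfolding orthogonal_transformation
proof
  show "linear (plane_rotation i j c s)"
    unfolding plane_rotation_def by (auto simp: linear_iff inner_simps algebra_simps)
  show "\<forall>y. norm (plane_rotation i j c s y) = norm y"
  proof
    fix y
    let ?a = "y \<bullet> i" and ?b = "y \<bullet> j"
    have "plane_rotation i j c s y \<bullet> plane_rotation i j c s y
        = y \<bullet> y + (c\<^sup>2 + s\<^sup>2 - 1) * (?a\<^sup>2 + ?b\<^sup>2)"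
      using assms(1-3)
      by (simp add: plane_rotation_def inner_simps inner_commute power2_eq_square algebra_simps)
    then show "norm (plane_rotation i j c s y) = norm y"
      using assms(4) by (simp add: norm_eq_sqrt_inner)
  qed
qed

text \<open>For \<open>s \<noteq> 0\<close> the rotation factors into three shears.\<close>
lemma lborel_distr_plane_rotation:
  fixes i j :: "'a::euclidean_space"
  assumes i: "i \<in> Basis" and j: "j \<in> Basis" and "i \<noteq> j" and "c\<^sup>2 + s\<^sup>2 = 1" "s \<noteq> 0"
  shows "distr lborel borel (plane_rotation i j c s) = lborel"
proof -
  define \<alpha> where "\<alpha> = (c - 1) / s"
  define H1 where "H1 = (\<lambda>y::'a. y + (\<alpha> * (y \<bullet> j)) *\<^sub>R i)"
  define H2 where "H2 = (\<lambda>y::'a. y + (s * (y \<bullet> i)) *\<^sub>R j)"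
  have [measurable]: "H1 \<in> borel_measurable borel" "H2 \<in> borel_measurable borel"
    unfolding H1_def H2_def by measurable
  have \<alpha>s: "\<alpha> * s = c - 1"
    using \<open>s \<noteq> 0\<close> by (simp add: \<alpha>_def)
  have "(c - 1) * (c + 1) = - (s * s)"
    using assms(4) by (simp add: power2_eq_square algebra_simps)
  then have \<alpha>\<alpha>s: "\<alpha> * (2 + \<alpha> * s) = - s"
    using \<open>s \<noteq> 0\<close> unfolding \<alpha>s by (simp add: \<alpha>_def field_simps)
  have "plane_rotation i j c s = H1 \<circ> (H2 \<circ> H1)"
  proof
    fix y
    have "H1 (H2 (H1 y)) = y + (\<alpha> * s * (y \<bullet> i) - - (\<alpha> * (2 + \<alpha> * s)) * (y \<bullet> j)) *\<^sub>R i
        + (s * (y \<bullet> i) + \<alpha> * s * (y \<bullet> j)) *\<^sub>R j"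
      using i j \<open>i \<noteq> j\<close>
      by (simp add: H1_def H2_def inner_simps inner_Basis algebra_simps) (simp flip: scaleR_add_left)
    then show "plane_rotation i j c s y = (H1 \<circ> (H2 \<circ> H1)) y"
      unfolding \<alpha>\<alpha>s unfolding \<alpha>s plane_rotation_def by simp
  qed
  then have "distr lborel borel (plane_rotation i j c s)
      = distr (distr (distr lborel borel H1) borel H2) borel H1"
    by (simp add: distr_distr)
  also have "\<dots> = lborel"
    using i j \<open>i \<noteq> j\<close> unfolding H1_def H2_def by (simp add: lborel_distr_shear)
  finally show ?thesis .
qed

lemma plane_rotation_clearing_coordinate:
  fixes u b k :: "'a::euclidean_space"
  assumes b: "b \<in> Basis" and k: "k \<in> Basis" "k \<noteq> b" and "u \<bullet> k \<noteq> 0"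
  obtains R where "orthogonal_transformation R" "distr lborel borel R = lborel" "R u \<bullet> k = 0"
    "\<And>k'. k' \<in> Basis \<Longrightarrow> k' \<noteq> b \<Longrightarrow> k' \<noteq> k \<Longrightarrow> R u \<bullet> k' = u \<bullet> k'"
proof
  define r where "r = sqrt ((u \<bullet> b)\<^sup>2 + (u \<bullet> k)\<^sup>2)"
  have "r > 0"
    using \<open>u \<bullet> k \<noteq> 0\<close> by (simp add: r_def add_nonneg_pos)
  define R where "R = plane_rotation b k ((u \<bullet> b) / r) (- (u \<bullet> k) / r)"
  have "((u \<bullet> b) / r)\<^sup>2 + (- (u \<bullet> k) / r)\<^sup>2 = 1"
    using \<open>r > 0\<close> \<open>u \<bullet> k \<noteq> 0\<close> by (simp add: r_def power_divide add_divide_distrib[symmetric])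
  then show "orthogonal_transformation R" "distr lborel borel R = lborel"
    using assms \<open>r > 0\<close> unfolding R_def
    by (simp_all add: orthogonal_transformation_plane_rotation lborel_distr_plane_rotation
        inner_Basis)
  show "R u \<bullet> k = 0"
    using b k \<open>r > 0\<close> by (simp add: R_def inner_plane_rotation inner_Basis field_simps)
  show "R u \<bullet> k' = u \<bullet> k'" if "k' \<in> Basis" "k' \<noteq> b" "k' \<noteq> k" for k'
    using b k that by (simp add: R_def inner_plane_rotation inner_Basis)
qed

lemma lborel_orthogonal_to_Basis_axis:
  fixes u b :: "'a::euclidean_space"
  assumes b: "b \<in> Basis" and u: "u = (u \<bullet> b) *\<^sub>R b"
  obtains T where "orthogonal_transformation T" "distr lborel borel T = lborel" "T u = norm u *\<^sub>R b"
proof -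
  have "norm u = \<bar>u \<bullet> b\<bar>"
    using arg_cong[OF u, of norm] b by simp
  show thesis
  proof (cases "u \<bullet> b \<ge> 0")
    case True
    then have "u = norm u *\<^sub>R b"
      using \<open>norm u = \<bar>u \<bullet> b\<bar>\<close> by (subst (1) u) simp
    then show ?thesis
      using that[of "\<lambda>x. x"] by (simp add: distr_id2)
  next
    case False
    then have "- u = norm u *\<^sub>R b"
      using \<open>norm u = \<bar>u \<bullet> b\<bar>\<close> by (subst u) simp
    moreover have "distr lborel borel (uminus :: 'a \<Rightarrow> 'a) = lborel"
      using lborel_affine[of "-1::real" "0::'a"] by (simp add: density_1)
    ultimately show ?thesis
      using that[of uminus] orthogonal_transformation_neg[of "\<lambda>x. x"] by simp
  qed
qed

lemma lborel_orthogonal_to_Basis: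
  fixes u b :: "'a::euclidean_space"
  assumes b: "b \<in> Basis"
  obtains T where "orthogonal_transformation T" "distr lborel borel T = lborel" "T u = norm u *\<^sub>R b"
proof -
  let ?rotatable = "\<lambda>u. \<exists>T. orthogonal_transformation T \<and> distr lborel borel T = lborel \<and>
    T u = norm u *\<^sub>R b"
  have "\<forall>u. (\<forall>k\<in>Basis - insert b S. u \<bullet> k = 0) \<longrightarrow> ?rotatable u" if "S \<subseteq> Basis - {b}" for S
    using finite_subset[OF that finite_Diff[OF finite_Basis]] that
  proof (induction S rule: finite_subset_induct)
    case empty
    have "u = (u \<bullet> b) *\<^sub>R b" if "\<forall>k\<in>Basis - insert b {}. u \<bullet> k = 0" for u :: 'a
    proof (rule euclidean_eqI)
      fix k :: 'a assume "k \<in> Basis"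
      then show "u \<bullet> k = ((u \<bullet> b) *\<^sub>R b) \<bullet> k"
        using that b by (cases "k = b") (simp_all add: inner_Basis)
    qed
    then show ?case
      using lborel_orthogonal_to_Basis_axis[OF b] by blast
  next
    case (insert k S)
    show ?case
    proof (intro allI impI)
      fix u :: 'a assume u: "\<forall>k'\<in>Basis - insert b (insert k S). u \<bullet> k' = 0"
      show "?rotatable u"
      proof (cases "u \<bullet> k = 0")
        case True
        then show ?thesis using u insert.IH by auto
      next
        case False
        obtain R where R: "orthogonal_transformation R" "distr lborel borel R = lborel"
          "R u \<bullet> k = 0" "\<And>k'. k' \<in> Basis \<Longrightarrow> k' \<noteq> b \<Longrightarrow> k' \<noteq> k \<Longrightarrow> R u \<bullet> k' = u \<bullet> k'"
          using plane_rotation_clearing_coordinate[OF b _ _ False] insert.hyps by auto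
        have "\<forall>k'\<in>Basis - insert b S. R u \<bullet> k' = 0"
          using R(3,4) u by (metis Diff_iff insert_iff)
        then obtain T where T: "orthogonal_transformation T" "distr lborel borel T = lborel"
          "T (R u) = norm (R u) *\<^sub>R b"
          using insert.IH by blast
        have "distr lborel borel (T \<circ> R) = distr (distr lborel borel R) borel T"
          using T(1) R(1) by (intro distr_distr[symmetric])
            (simp_all add: linear_borel_measurable orthogonal_transformation_linear)
        then show ?thesis
          using T R(1,2) by (intro exI[of _ "T \<circ> R"])
            (simp add: orthogonal_transformation_compose orthogonal_transformation_norm)
      qed
    qed
  qed
  then show thesis
    using that by blast
qed

section \<open>Caps and cylinders\<close>

lemma inner_sum_Basis_subset:
  fixes x :: "'a::euclidean_space \<Rightarrow> real"
  assumes "A \<subseteq> Basis" "j \<in> Basis"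
  shows "(\<Sum>k\<in>A. x k *\<^sub>R k) \<bullet> j = (if j \<in> A then x j else 0)"
proof -
  have "finite A"
    using assms finite_Basis finite_subset by blast
  have "(\<Sum>k\<in>A. x k *\<^sub>R k) \<bullet> j = (\<Sum>k\<in>A. if k = j then x k else 0)"
    unfolding inner_sum_left using assms by (intro sum.cong) (auto simp: inner_Basis subset_iff)
  also have "\<dots> = (if j \<in> A then x j else 0)"
    using \<open>finite A\<close> by (simp add: sum.delta)
  finally show ?thesis .
qed

lemma norm_sum_Basis_subset:
  fixes x :: "'a::euclidean_space \<Rightarrow> real"
  assumes "A \<subseteq> Basis"
  shows "norm (\<Sum>k\<in>A. x k *\<^sub>R k) = sqrt (\<Sum>k\<in>A. (x k)\<^sup>2)"
  using assms
  by (simp add: norm_eq_sqrt_inner inner_sum_right inner_sum_Basis_subset subset_iff power2_eq_square)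

lemma norm_sq_eq_component_plus_orthogonal:
  fixes b y :: "'a::real_inner"
  assumes "norm b = 1"
  shows "(norm y)\<^sup>2 = (b \<bullet> y)\<^sup>2 + (norm (y - (b \<bullet> y) *\<^sub>R b))\<^sup>2"
  using assms by (simp only: power2_norm_eq_inner)
    (simp add: norm_eq_1 inner_simps inner_commute power2_eq_square algebra_simps)

definition cylinder :: "'a::real_inner \<Rightarrow> real \<Rightarrow> real \<Rightarrow> real \<Rightarrow> 'a set" where
  "cylinder b a c \<rho> = {y. b \<bullet> y \<in> {a..c} \<and> norm (y - (b \<bullet> y) *\<^sub>R b) \<le> \<rho>}"

definition ball_cap :: "'a::real_inner \<Rightarrow> real \<Rightarrow> real \<Rightarrow> 'a set" where
  "ball_cap u r s = {y. norm y \<le> r \<and> s \<le> u \<bullet> y}"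

lemma emeasure_cylinder:
  fixes b :: "'a::euclidean_space"
  assumes b: "b \<in> Basis" and "a \<le> c" "\<rho> > 0"
  shows "emeasure lborel (cylinder b a c \<rho>) =
    ennreal ((c - a) * (unit_ball_vol (DIM('a) - 1) * \<rho> ^ (DIM('a) - 1)))"
proof -
  let ?P = "\<Pi>\<^sub>M k\<in>Basis - {b}. lborel"
  let ?disc = "{x. sqrt (\<Sum>k\<in>Basis - {b}. (x k)\<^sup>2) \<le> \<rho>} \<inter> space ?P"
  have [measurable]: "cylinder b a c \<rho> \<in> sets borel" "?disc \<in> sets ?P"
    unfolding cylinder_def by measurable
  have "indicator (cylinder b a c \<rho>) ((\<Sum>k\<in>Basis - {b}. x k *\<^sub>R k) + t *\<^sub>R b)
      = indicator {a..c} t * (indicator ?disc x :: ennreal)" if "x \<in> space ?P" for x t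
  proof -
    have "b \<bullet> (\<Sum>k\<in>Basis - {b}. x k *\<^sub>R k) = 0"
      using b by (subst inner_commute) (simp add: inner_sum_Basis_subset)
    then show ?thesis
      using b that by (simp add: cylinder_def norm_sum_Basis_subset inner_simps indicator_def)
  qed
  then have "emeasure lborel (cylinder b a c \<rho>)
      = (\<integral>\<^sup>+ t. \<integral>\<^sup>+ x. indicator {a..c} t * indicator ?disc x \<partial>?P \<partial>lborel)"
    by (simp add: nn_integral_lborel_Basis_split(2)[OF b]
        flip: nn_integral_indicator cong: nn_integral_cong)
  also have "\<dots> = (\<integral>\<^sup>+ t. emeasure ?P ?disc * indicator {a..c} t \<partial>lborel)"
    by (simp add: nn_integral_cmult mult.commute)
  also have "\<dots> = emeasure ?P ?disc * (c - a)"
    using \<open>a \<le> c\<close> by (simp add: nn_integral_cmult_indicator)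
  also have "emeasure ?P ?disc = ennreal (unit_ball_vol (DIM('a) - 1) * \<rho> ^ (DIM('a) - 1))"
    using emeasure_cball_aux[of "Basis - {b}" \<rho>] b \<open>\<rho> > 0\<close> by (simp add: card_Diff_singleton)
  finally show ?thesis
    using \<open>a \<le> c\<close> \<open>\<rho> > 0\<close> by (simp add: ennreal_mult' mult.commute)
qed

lemma emeasure_ball_cap_rotate:
  fixes u b :: "'a::euclidean_space"
  assumes "norm u = 1" "b \<in> Basis"
  shows "emeasure lborel (ball_cap u r s) = emeasure lborel (ball_cap b r s)"
proof -
  obtain T where T: "orthogonal_transformation T" "distr lborel borel T = lborel" "T u = b"
    using lborel_orthogonal_to_Basis[OF assms(2), of u] assms(1) by auto
  have "T -` ball_cap b r s = ball_cap u r s"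
    using T(1)
    by (auto simp: ball_cap_def orthogonal_transformation_norm orthogonal_transformation_def
        simp flip: T(3))
  moreover have "ball_cap b r s \<in> sets borel"
    unfolding ball_cap_def by measurable
  moreover have "T \<in> borel_measurable borel"
    using T(1) by (simp add: linear_borel_measurable orthogonal_transformation_linear)
  ultimately show ?thesis
    using emeasure_distr[of T lborel borel "ball_cap b r s"] T(2) by simp
qed

lemma cylinder_subset_ball_cap:
  fixes b :: "'a::real_inner"
  assumes "norm b = 1" "0 \<le> s" "2 * s \<le> r"
  shows "cylinder b s (2 * s) (sqrt (r\<^sup>2 - (2 * s)\<^sup>2)) \<subseteq> ball_cap b r s"
proof
  fix y assume y: "y \<in> cylinder b s (2 * s) (sqrt (r\<^sup>2 - (2 * s)\<^sup>2))"
  then have "(b \<bullet> y)\<^sup>2 \<le> (2 * s)\<^sup>2"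
    using assms by (intro power_mono) (auto simp: cylinder_def)
  moreover have "(2 * s)\<^sup>2 \<le> r\<^sup>2"
    using assms by (intro power_mono) auto
  moreover have "(norm (y - (b \<bullet> y) *\<^sub>R b))\<^sup>2 \<le> (sqrt (r\<^sup>2 - (2 * s)\<^sup>2))\<^sup>2"
    using y by (intro power_mono) (auto simp: cylinder_def)
  ultimately have "(norm y)\<^sup>2 \<le> r\<^sup>2"
    using norm_sq_eq_component_plus_orthogonal[OF assms(1), of y] by simp
  then show "y \<in> ball_cap b r s"
    using y assms by (auto simp: ball_cap_def cylinder_def power2_le_iff_abs_le)
qed

lemma cball_subset_cylinder:
  fixes b :: "'a::real_inner"
  assumes "norm b = 1"
  shows "cball 0 r \<subseteq> cylinder b (- r) r r"
proof
  fix y :: 'a assume "y \<in> cball 0 r"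
  then have y: "norm y \<le> r" by simp
  have "\<bar>b \<bullet> y\<bar> \<le> r"
    using Cauchy_Schwarz_ineq2[of b y] assms y by simp
  moreover have "(norm (y - (b \<bullet> y) *\<^sub>R b))\<^sup>2 \<le> (norm y)\<^sup>2"
    using norm_sq_eq_component_plus_orthogonal[OF assms, of y] by simp
  then have "norm (y - (b \<bullet> y) *\<^sub>R b) \<le> norm y"
    by (simp add: power2_le_iff_abs_le)
  ultimately show "y \<in> cylinder b (- r) r r"
    using y by (auto simp: cylinder_def)
qed

lemma emeasure_ball_cap_ge:
  fixes u :: "'a::euclidean_space"
  assumes "norm u = 1" "0 \<le> s" "2 * s < r"
  shows "ennreal (s * (unit_ball_vol (DIM('a) - 1) * sqrt (r\<^sup>2 - (2 * s)\<^sup>2) ^ (DIM('a) - 1)))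
    \<le> emeasure lborel (ball_cap u r s)"
proof -
  obtain b :: 'a where b: "b \<in> Basis"
    using nonempty_Basis by blast
  have "(2 * s)\<^sup>2 < r\<^sup>2"
    using assms by (intro power_strict_mono) auto
  then have "ennreal (s * (unit_ball_vol (DIM('a) - 1) * sqrt (r\<^sup>2 - (2 * s)\<^sup>2) ^ (DIM('a) - 1)))
      = emeasure lborel (cylinder b s (2 * s) (sqrt (r\<^sup>2 - (2 * s)\<^sup>2)))"
    using b assms by (simp add: emeasure_cylinder)
  also have "\<dots> \<le> emeasure lborel (ball_cap b r s)"
    using b assms by (intro emeasure_mono cylinder_subset_ball_cap) (auto simp: ball_cap_def)
  also have "\<dots> = emeasure lborel (ball_cap u r s)"
    using emeasure_ball_cap_rotate[OF assms(1) b] by simp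
  finally show ?thesis .
qed

lemma emeasure_cball_le:
  assumes "0 < r"
  shows "emeasure lborel (cball (0::'a::euclidean_space) r)
    \<le> ennreal (2 * r * (unit_ball_vol (DIM('a) - 1) * r ^ (DIM('a) - 1)))"
proof -
  obtain b :: 'a where b: "b \<in> Basis"
    using nonempty_Basis by blast
  then have "emeasure lborel (cball (0::'a) r) \<le> emeasure lborel (cylinder b (- r) r r)"
    by (intro emeasure_mono cball_subset_cylinder) (auto simp: cylinder_def)
  also have "\<dots> = ennreal (2 * r * (unit_ball_vol (DIM('a) - 1) * r ^ (DIM('a) - 1)))"
    using b assms by (simp add: emeasure_cylinder)
  finally show ?thesis .
qed

lemma ball_cap_fraction_ge:
  fixes u :: "'a::euclidean_space"
  assumes "norm u = 1" "0 \<le> s" "2 * s < r"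
  shows "s * sqrt (r\<^sup>2 - (2 * s)\<^sup>2) ^ (DIM('a) - 1) / (2 * r * r ^ (DIM('a) - 1))
    \<le> measure lborel (ball_cap u r s) / measure lborel (cball (0::'a) r)"
proof -
  define n where "n = DIM('a) - 1"
  define V where "V = unit_ball_vol (real n)"
  define \<rho> where "\<rho> = sqrt (r\<^sup>2 - (2 * s)\<^sup>2)"
  have "0 < r" "0 < V"
    using assms by (simp_all add: V_def)
  have "emeasure lborel (ball_cap u r s) \<le> emeasure lborel (cball (0::'a) r)"
    by (intro emeasure_mono) (auto simp: ball_cap_def)
  then have "emeasure lborel (ball_cap u r s) \<noteq> \<infinity>"
    using emeasure_lborel_cball_finite[of "0::'a" r] by (auto simp: top_unique)
  then have cap: "s * (V * \<rho> ^ n) \<le> measure lborel (ball_cap u r s)"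
    using emeasure_ball_cap_ge[OF assms]
    by (simp add: emeasure_eq_ennreal_measure ennreal_le_iff V_def \<rho>_def n_def)
  have ball: "measure lborel (cball (0::'a) r) \<le> 2 * r * (V * r ^ n)"
    using emeasure_cball_le[where 'a='a, OF \<open>0 < r\<close>] emeasure_lborel_cball_finite[of "0::'a" r]
      \<open>0 < r\<close> \<open>0 < V\<close>
    by (simp add: emeasure_eq_ennreal_measure ennreal_le_iff V_def n_def)
  have "0 < measure lborel (cball (0::'a) r)"
    using \<open>0 < r\<close> by (simp add: measure_def emeasure_cball)
  have "s * \<rho> ^ n / (2 * r * r ^ n) = s * (V * \<rho> ^ n) / (2 * r * (V * r ^ n))"
    using \<open>0 < V\<close> by simp
  also have "\<dots> \<le> measure lborel (ball_cap u r s) / measure lborel (cball (0::'a) r)"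
    using cap ball \<open>0 < measure lborel (cball (0::'a) r)\<close> assms(2)
    by (intro frac_le) (auto simp: \<rho>_def)
  finally show ?thesis
    by (simp add: n_def \<rho>_def)
qed

section \<open>Numerical bounds\<close>

lemma ln_three_halves_bounds: "1/3 \<le> ln (3/2::real)" "ln (3/2::real) \<le> 9/20"
proof -
  have "ln (2/3::real) \<le> 2/3 - 1"
    by (rule ln_le_minus_one) simp
  then show "1/3 \<le> ln (3/2::real)"
    by (simp add: ln_div)
  have "ln (sqrt (3/2::real)) \<le> sqrt (3/2) - 1"
    by (rule ln_le_minus_one) simp
  moreover have "sqrt (3/2::real) \<le> 49/40"
    by (rule real_le_lsqrt) (auto simp: power2_eq_square)
  ultimately show "ln (3/2::real) \<le> 9/20"
    by (simp add: ln_sqrt)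
qed

lemma ln_three_halves_sqrt_bound: "1/10 \<le> ln (3/2) * sqrt (1 - 4 * (ln (3/2::real))\<^sup>2)"
proof -
  define c where "c = ln (3/2::real)"
  have c: "1/3 \<le> c" "c \<le> 9/20"
    using ln_three_halves_bounds by (simp_all add: c_def)
  have "4 * c\<^sup>2 \<le> 81/100"
    using power_mono[OF c(2), of 2] c(1) by (simp add: power2_eq_square)
  then have "(1/10)\<^sup>2 \<le> c\<^sup>2 * (1 - 4 * c\<^sup>2)"
    using mult_mono[OF power_mono[OF c(1), of 2], of "19/100" "1 - 4 * c\<^sup>2"]
    by (simp add: power2_eq_square)
  then have "1/10 \<le> sqrt (c\<^sup>2 * (1 - 4 * c\<^sup>2))"
    by (rule real_le_rsqrt)
  also have "\<dots> = c * sqrt (1 - 4 * c\<^sup>2)"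
    using c(1) by (simp add: real_sqrt_mult)
  finally show ?thesis
    by (simp add: c_def)
qed

lemma sqrt_one_minus_pow_ge:
  fixes t :: real
  assumes "0 \<le> t" "t \<le> 1" "m \<le> n"
  shows "sqrt (1 - real n * t) \<le> sqrt (1 - t) ^ m"
proof -
  have "1 - real n * t \<le> (1 - t) ^ n"
    using Bernoulli_inequality[of "- t" n] assms(2) by simp
  then have "sqrt (1 - real n * t) \<le> sqrt ((1 - t) ^ n)"
    by (rule real_sqrt_le_mono)
  also have "\<dots> = sqrt (1 - t) ^ n"
    by (rule real_sqrt_power)
  also have "\<dots> \<le> sqrt (1 - t) ^ m"
    using assms by (intro power_decreasing) auto
  finally show ?thesis .
qed

lemma three_halves_cap_bounds:
  fixes r :: real and D m :: nat
  assumes "1 \<le> D" "m \<le> D" "0 < r"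
  defines "s \<equiv> r * ln (3/2) / sqrt D"
  shows "0 \<le> s" "2 * s < r"
    and "1 / (20 * sqrt D) \<le> s * sqrt (r\<^sup>2 - (2 * s)\<^sup>2) ^ m / (2 * r * r ^ m)"
proof -
  define c where "c = ln (3/2::real)"
  have c: "1/3 \<le> c" "c \<le> 9/20"
    using ln_three_halves_bounds by (simp_all add: c_def)
  have "1 \<le> sqrt D"
    using assms(1) by simp
  have s: "s = r * (c / sqrt D)"
    by (simp add: s_def c_def)
  show "0 \<le> s"
    using c \<open>0 < r\<close> by (simp add: s)
  have "c / sqrt D \<le> c"
    using c \<open>1 \<le> sqrt D\<close> by (simp add: divide_le_eq)
  then have "s \<le> r * (9/20)"
    using c \<open>0 < r\<close> unfolding s by (intro mult_left_mono) linarith+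
  then show "2 * s < r"
    using \<open>0 < r\<close> by simp
  define t where "t = 4 * c\<^sup>2 / D"
  have "4 * c\<^sup>2 \<le> 81/100"
    using power_mono[OF c(2), of 2] c(1) by (simp add: power2_eq_square)
  then have t: "0 \<le> t" "t \<le> 1" "real D * t = 4 * c\<^sup>2"
    using assms(1) by (auto simp: t_def divide_le_eq)
  have "r\<^sup>2 - (2 * s)\<^sup>2 = r\<^sup>2 * (1 - t)"
    using assms(1) by (simp add: s t_def power_mult_distrib power_divide algebra_simps)
  then have root: "sqrt (r\<^sup>2 - (2 * s)\<^sup>2) ^ m = r ^ m * sqrt (1 - t) ^ m"
    using \<open>0 < r\<close> by (simp add: real_sqrt_mult power_mult_distrib)
  have "1/10 \<le> c * sqrt (1 - real D * t)"
    using ln_three_halves_sqrt_bound t(3) by (simp add: c_def)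
  also have "\<dots> \<le> c * sqrt (1 - t) ^ m"
    using sqrt_one_minus_pow_ge[OF t(1,2) assms(2)] c(1) by (intro mult_left_mono) auto
  finally have "1/10 \<le> c * sqrt (1 - t) ^ m" .
  then have "1 / (20 * sqrt D) \<le> c * sqrt (1 - t) ^ m / (2 * sqrt D)"
    using \<open>1 \<le> sqrt D\<close> divide_right_mono[of "1/10" _ "2 * sqrt D"] by simp
  also have "c * sqrt (1 - t) ^ m / (2 * sqrt D) = s * sqrt (r\<^sup>2 - (2 * s)\<^sup>2) ^ m / (2 * r * r ^ m)"
    using \<open>0 < r\<close> unfolding root by (simp add: s)
  finally show "1 / (20 * sqrt D) \<le> s * sqrt (r\<^sup>2 - (2 * s)\<^sup>2) ^ m / (2 * r * r ^ m)" .
qed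

section \<open>The uniform distribution on a subspace ball\<close>

lemma measure_uniform_subspace_ball:
  fixes g :: "'k::euclidean_space \<Rightarrow> 'a::euclidean_space"
  assumes [measurable]: "g \<in> borel_measurable borel" "Q \<in> sets borel" and "0 < r"
  shows "measure (uniform_subspace_ball g p r) Q =
    measure lborel (cball 0 r \<inter> (\<lambda>y. p + g y) -` Q) / measure lborel (cball (0::'k) r)"
proof -
  let ?U = "uniform_measure lborel (cball (0::'k) r)"
  have "emeasure lborel (cball (0::'k) r) \<noteq> 0" "emeasure lborel (cball (0::'k) r) \<noteq> \<infinity>"
    using \<open>0 < r\<close> by (simp_all add: emeasure_cball less_imp_neq[symmetric])
  moreover have "(\<lambda>y. p + g y) -` Q \<in> sets lborel"
    by (simp, rule measurable_sets_borel) measurable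
  moreover have "measure (uniform_subspace_ball g p r) Q
      = measure ?U ((\<lambda>y. p + g y) -` Q \<inter> space ?U)"
    unfolding uniform_subspace_ball_def
    by (rule measure_distr) (simp_all add: measurable_cong_sets[OF sets_uniform_measure refl])
  ultimately show ?thesis
    by simp
qed

lemma inj_linear_imp_DIM_le:
  fixes g :: "'k::euclidean_space \<Rightarrow> 'a::euclidean_space"
  assumes "linear g" "inj g"
  shows "DIM('k) \<le> DIM('a)"
proof -
  have "dim (range g) = dim (UNIV :: 'k set)"
    using assms by (intro dim_image_eq) (auto intro: inj_on_subset)
  then show ?thesis
    using dim_subset_UNIV[of "range g"] by simp
qed

theorem lemma13:
  fixes L :: "'a::euclidean_space set"
    and g :: "'k::euclidean_space \<Rightarrow> 'a"
    and pstar h :: 'a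
    and \<zeta> :: real
  assumes "DIM('a) \<ge> 2"
    and "subspace L"
    and "linear g" "\<And>y. norm (g y) = norm y" "range g = L"
    and "pstar \<in> L"
    and "\<zeta> > 0"
    and "h \<in> L" "norm h = 1"
  shows "measure (uniform_subspace_ball g pstar \<zeta>)
           {q. h \<bullet> q \<ge> h \<bullet> pstar + \<zeta> * ln (3/2) / sqrt (real DIM('a) - 1)}
         \<ge> 1 / (20 * sqrt (real DIM('a) - 1))"
proof -
  define D where "D = DIM('a) - 1"
  define \<sigma> where "\<sigma> = \<zeta> * ln (3/2) / sqrt D"
  have "real DIM('a) - 1 = real D"
    using assms(1) by (simp add: D_def)
  have g: "orthogonal_transformation g"
    using assms(3,4) by (simp add: orthogonal_transformation)
  obtain u where "h = g u"
    using assms(5,8) by auto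
  then have "norm u = 1" and hu: "\<And>y. h \<bullet> g y = u \<bullet> y"
    using g assms(4,9) by (auto simp: orthogonal_transformation_def)
  have "DIM('k) - 1 \<le> D"
    using inj_linear_imp_DIM_le[OF assms(3) orthogonal_transformation_inj[OF g]]
    by (simp add: D_def)
  then have \<sigma>: "0 \<le> \<sigma>" "2 * \<sigma> < \<zeta>"
    and bound: "1 / (20 * sqrt D)
      \<le> \<sigma> * sqrt (\<zeta>\<^sup>2 - (2 * \<sigma>)\<^sup>2) ^ (DIM('k) - 1) / (2 * \<zeta> * \<zeta> ^ (DIM('k) - 1))"
    using three_halves_cap_bounds[of D "DIM('k) - 1" \<zeta>] assms(1,7) by (simp_all add: D_def \<sigma>_def)
  have "cball 0 \<zeta> \<inter> (\<lambda>y. pstar + g y) -` {q. h \<bullet> q \<ge> h \<bullet> pstar + \<sigma>} = ball_cap u \<zeta> \<sigma>"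
    by (auto simp: ball_cap_def inner_simps hu)
  then have "measure (uniform_subspace_ball g pstar \<zeta>) {q. h \<bullet> q \<ge> h \<bullet> pstar + \<sigma>}
      = measure lborel (ball_cap u \<zeta> \<sigma>) / measure lborel (cball (0::'k) \<zeta>)"
    using measure_uniform_subspace_ball[of g "{q. h \<bullet> q \<ge> h \<bullet> pstar + \<sigma>}" \<zeta> pstar] assms(7)
    by (simp add: linear_borel_measurable[OF assms(3)])
  then show ?thesis
    using ball_cap_fraction_ge[OF \<open>norm u = 1\<close> \<sigma>] bound \<open>real DIM('a) - 1 = real D\<close>
    by (simp add: \<sigma>_def)
qed

end
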